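(* Let $J_{nonlsd}\subset MPR$ be the subgroup spanned by all permutation words that are not lsd. Then $J_{nonlsd}$ is a two-sided ideal of the algebra $(MPR,m')$.
   Context: A permutation word of length $n$ is a word $[s_1,\dots,s_n]$ over $\mathbf N$ in which each of $1,\dots,n$ occurs exactly once; $S_n$ denotes the set of these; the empty word is the permutation word of length $0$. Its descent set is $\mathrm{desc}(\sigma)=\{i\in\{1,\dots,n-1\}:s_i>s_{i+1}\}$. A permutation $\sigma\in S_n$ is lsd if it is the lexicographically smallest element of $\{\tau\in S_n:\mathrm{desc}(\tau)=\mathrm{desc}(\sigma)\}$. $*$ is concatenation, $\mathrm{supp}$ the set of letters of a word, and for a word $\alpha$ over $\mathbf N$ without repeated letters $\mathrm{st}(\alpha)$ replaces its letters by $1,\dots,\mathrm{length}(\alpha)$ via the order-preserving bijection. $(MPR,m')$ is the free abelian group on all permutation words with product defined for $\sigma\in S_m$, $\tau\in S_n$ by $m'(\sigma\otimes\tau)=\sum u*v$ over all pairs of words $u,v$ over $\mathbf N$ with $\mathrm{supp}(u)\cup\mathrm{supp}(v)=\{1,\dots,m+n\}$ (disjointly), $\mathrm{st}(u)=\sigma$, $\mathrm{st}(v)=\tau$. *)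

theory Defs
  imports "HOL-Library.Poly_Mapping"
begin

definition permword :: "nat list \<Rightarrow> bool" where
  "permword w \<longleftrightarrow> distinct w \<and> set w = {1..length w}"

definition Sn :: "nat \<Rightarrow> nat list set" where
  "Sn n = {w. permword w \<and> length w = n}"

definition desc :: "nat list \<Rightarrow> nat set" where
  "desc w = {i \<in> {1..length w - 1}. w ! (i - 1) > w ! i}"

text \<open>lsd: lexicographically smallest element of its descent class in S_n.\<close>
definition lsd :: "nat list \<Rightarrow> bool" where
  "lsd \<sigma> \<longleftrightarrow> (\<forall>\<tau> \<in> Sn (length \<sigma>). desc \<tau> = desc \<sigma> \<longrightarrow>
                 \<tau> = \<sigma> \<or> (\<sigma>, \<tau>) \<in> lexord {(a, b). a < b})"

text \<open>Standardization of a word without repeated letters.\<close>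
definition st :: "nat list \<Rightarrow> nat list" where
  "st \<alpha> = map (\<lambda>a. card {b \<in> set \<alpha>. b \<le> a}) \<alpha>"

definition mpairs :: "nat list \<Rightarrow> nat list \<Rightarrow> (nat list \<times> nat list) set" where
  "mpairs \<sigma> \<tau> = {(u, v). distinct u \<and> distinct v \<and> set u \<inter> set v = {} \<and>
      set u \<union> set v = {1..length \<sigma> + length \<tau>} \<and> st u = \<sigma> \<and> st v = \<tau>}"

text \<open>MPR: the free abelian group on permutation words, as finitely supported
  integer-valued functions on words supported on permutation words.\<close>
definition MPR :: "(nat list \<Rightarrow>\<^sub>0 int) set" where
  "MPR = {f. Poly_Mapping.keys f \<subseteq> {w. permword w}}"

definition mbasic :: "nat list \<Rightarrow> nat list \<Rightarrow> (nat list \<Rightarrow>\<^sub>0 int)" where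
  "mbasic \<sigma> \<tau> = (\<Sum>(u, v) \<in> mpairs \<sigma> \<tau>. Poly_Mapping.single (u @ v) 1)"

definition mprod :: "(nat list \<Rightarrow>\<^sub>0 int) \<Rightarrow> (nat list \<Rightarrow>\<^sub>0 int) \<Rightarrow> (nat list \<Rightarrow>\<^sub>0 int)" where
  "mprod f g = (\<Sum>\<sigma> \<in> Poly_Mapping.keys f. \<Sum>\<tau> \<in> Poly_Mapping.keys g.
      Poly_Mapping.map (\<lambda>c. (Poly_Mapping.lookup f \<sigma> * Poly_Mapping.lookup g \<tau>) * c) (mbasic \<sigma> \<tau>))"

definition J_nonlsd :: "(nat list \<Rightarrow>\<^sub>0 int) set" where
  "J_nonlsd = {f. Poly_Mapping.keys f \<subseteq> {w. permword w \<and> \<not> lsd w}}"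

end

theory Submission
  imports Defs "HOL-Combinatorics.Transposition"
begin

text \<open>A permutation word w is lsd exactly when each of its inversions spans a descending run:
  i < j and w_i > w_j force w_i > w_(i+1) > ... > w_j.
  If the values a+1 and a stood at non-adjacent positions p < q of an lsd word, exchanging them
  would keep the descent set and make the word lexicographically smaller; and once such value pairs
  are adjacent, every inversion is a descending run, by induction on w_i - w_j.
  Conversely, let tau have the descents of w and first differ from it at i with tau_i < w_i. Then
  tau descends on the maximal descending run of w starting at i, so its values there are below
  w_i and outside the common prefix; in w they must therefore lie in that same run. Counting, tau
  takes exactly the values of w on the run, w_i among them, although all of them are at most tau_i.
  The run condition passes to factors and is invariant under standardization, so a term u @ v of
  m'(sigma (x) tau) can only be lsd if st u = sigma and st v = tau are.\<close>

definition inversions_decreasing :: "'a::linorder list \<Rightarrow> bool" where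
  "inversions_decreasing w \<longleftrightarrow>
     (\<forall>i j k. i \<le> k \<and> k < j \<and> j < length w \<and> w ! j < w ! i \<longrightarrow> w ! Suc k < w ! k)"

definition successor_pairs_adjacent :: "nat list \<Rightarrow> bool" where
  "successor_pairs_adjacent w \<longleftrightarrow>
     (\<forall>p q. p < q \<and> q < length w \<and> w ! p = Suc (w ! q) \<longrightarrow> q = Suc p)"

lemma inversions_decreasingD:
  "inversions_decreasing w \<Longrightarrow> i \<le> k \<Longrightarrow> k < j \<Longrightarrow> j < length w \<Longrightarrow> w ! j < w ! i \<Longrightarrow>
     w ! Suc k < w ! k"
  unfolding inversions_decreasing_def by blast

lemma card_le_less_card_le_iff:
  fixes A :: "'a::linorder set"
  assumes "finite A" "a \<in> A" "b \<in> A"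
  shows "card {c \<in> A. c \<le> a} < card {c \<in> A. c \<le> b} \<longleftrightarrow> a < b"
proof
  assume "a < b"
  then have "b \<in> {c \<in> A. c \<le> b} - {c \<in> A. c \<le> a}"
    using assms(3) by auto
  then have "{c \<in> A. c \<le> a} \<subset> {c \<in> A. c \<le> b}"
    using \<open>a < b\<close> by auto
  then show "card {c \<in> A. c \<le> a} < card {c \<in> A. c \<le> b}"
    using assms(1) by (intro psubset_card_mono) auto
next
  assume less: "card {c \<in> A. c \<le> a} < card {c \<in> A. c \<le> b}"
  show "a < b"
  proof (rule ccontr)
    assume "\<not> a < b"
    then have "card {c \<in> A. c \<le> b} \<le> card {c \<in> A. c \<le> a}"
      using assms(1) by (intro card_mono) auto
    with less show False by simp
  qed
qed

lemma length_st [simp]: "length (st \<alpha>) = length \<alpha>"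
  by (simp add: st_def)

lemma st_nth_less_iff:
  assumes "i < length \<alpha>" "j < length \<alpha>"
  shows "st \<alpha> ! i < st \<alpha> ! j \<longleftrightarrow> \<alpha> ! i < \<alpha> ! j"
  using assms card_le_less_card_le_iff[of "set \<alpha>" "\<alpha> ! i" "\<alpha> ! j"] by (simp add: st_def)

lemma permword_st:
  assumes "distinct \<alpha>"
  shows "permword (st \<alpha>)"
proof -
  have "distinct (st \<alpha>)"
    unfolding distinct_conv_nth
  proof (intro allI impI)
    fix i j assume ij: "i < length (st \<alpha>)" "j < length (st \<alpha>)" "i \<noteq> j"
    then have "\<alpha> ! i \<noteq> \<alpha> ! j"
      using assms by (simp add: nth_eq_iff_index_eq)
    then show "st \<alpha> ! i \<noteq> st \<alpha> ! j"
      using ij st_nth_less_iff[of i \<alpha> j] st_nth_less_iff[of j \<alpha> i] by auto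
  qed
  moreover have "set (st \<alpha>) \<subseteq> {1..length \<alpha>}"
  proof
    fix r assume "r \<in> set (st \<alpha>)"
    then obtain a where a: "a \<in> set \<alpha>" and r: "r = card {b \<in> set \<alpha>. b \<le> a}"
      by (auto simp: st_def)
    have "0 < r"
      unfolding r using a by (subst card_gt_0_iff) auto
    moreover have "r \<le> card (set \<alpha>)"
      unfolding r by (intro card_mono) auto
    ultimately show "r \<in> {1..length \<alpha>}"
      using assms by (simp add: distinct_card)
  qed
  ultimately have "set (st \<alpha>) = {1..length (st \<alpha>)}"
    by (intro card_subset_eq) (auto simp: distinct_card)
  with \<open>distinct (st \<alpha>)\<close> show ?thesis
    by (simp add: permword_def)
qed

lemma inversions_decreasing_st_iff:
  "inversions_decreasing (st \<alpha>) \<longleftrightarrow> inversions_decreasing \<alpha>"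
proof -
  have "(i \<le> k \<and> k < j \<and> j < length \<alpha> \<and> st \<alpha> ! j < st \<alpha> ! i \<longrightarrow> st \<alpha> ! Suc k < st \<alpha> ! k) \<longleftrightarrow>
        (i \<le> k \<and> k < j \<and> j < length \<alpha> \<and> \<alpha> ! j < \<alpha> ! i \<longrightarrow> \<alpha> ! Suc k < \<alpha> ! k)" for i j k
    by (cases "i \<le> k \<and> k < j \<and> j < length \<alpha>") (auto simp: st_nth_less_iff)
  then show ?thesis
    unfolding inversions_decreasing_def length_st by (simp only:)
qed

lemma inversions_decreasing_append:
  assumes "inversions_decreasing (u @ v)"
  shows "inversions_decreasing u" "inversions_decreasing v"
proof -
  note run = inversions_decreasingD[OF assms]
  show "inversions_decreasing u"
    unfolding inversions_decreasing_def
  proof (intro allI impI)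
    fix i j k assume ijk: "i \<le> k \<and> k < j \<and> j < length u \<and> u ! j < u ! i"
    then have "(u @ v) ! Suc k < (u @ v) ! k"
      by (intro run[of i k j]) (auto simp: nth_append)
    with ijk show "u ! Suc k < u ! k"
      by (simp add: nth_append)
  qed
  show "inversions_decreasing v"
    unfolding inversions_decreasing_def
  proof (intro allI impI)
    fix i j k assume ijk: "i \<le> k \<and> k < j \<and> j < length v \<and> v ! j < v ! i"
    then have "(u @ v) ! Suc (length u + k) < (u @ v) ! (length u + k)"
      by (intro run[of "length u + i" "length u + k" "length u + j"]) auto
    then show "v ! Suc k < v ! k"
      by (metis add_Suc_right nth_append_length_plus)
  qed
qed

lemma Suc_mem_desc_iff:
  "Suc k < length w \<Longrightarrow> Suc k \<in> desc w \<longleftrightarrow> w ! Suc k < w ! k"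
  by (auto simp: desc_def)

lemma desc_map_eq:
  assumes "\<And>k. Suc k < length w \<Longrightarrow> f (w ! Suc k) < f (w ! k) \<longleftrightarrow> w ! Suc k < w ! k"
  shows "desc (map f w) = desc w"
  unfolding desc_def length_map
proof (intro Collect_cong conj_cong refl)
  fix i assume "i \<in> {1..length w - 1}"
  then obtain k where "i = Suc k" "Suc k < length w"
    by (cases i) auto
  then show "map f w ! (i - 1) > map f w ! i \<longleftrightarrow> w ! (i - 1) > w ! i"
    using assms by simp
qed

lemma transpose_Suc_less_iff:
  fixes x y v :: nat
  assumes "{x, y} \<noteq> {v, Suc v}"
  shows "transpose v (Suc v) x < transpose v (Suc v) y \<longleftrightarrow> x < y"
  using assms by (auto simp: transpose_def doubleton_eq_iff split: if_splits)

lemma lexord_less_iff_first_difference: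
  fixes x y :: "'a::linorder list"
  assumes "length x = length y"
  shows "(x, y) \<in> lexord {(a, b). a < b} \<longleftrightarrow> (\<exists>i < length y. take i x = take i y \<and> x ! i < y ! i)"
  using assms by (auto simp: lexord_take_index_conv)

lemma lsd_iff_no_lexord_smaller:
  "lsd w \<longleftrightarrow> (\<forall>\<tau> \<in> Sn (length w). desc \<tau> = desc w \<longrightarrow> (\<tau>, w) \<notin> lexord {(a, b). a < b})"
proof -
  let ?R = "{(a::nat, b). a < b}"
  have "asym (lexord ?R)"
    by (rule lexord_asym) (auto intro: asymI)
  moreover have "\<forall>a b. (a, b) \<in> ?R \<or> a = b \<or> (b, a) \<in> ?R"
    by auto
  ultimately have "\<tau> = w \<or> (w, \<tau>) \<in> lexord ?R \<longleftrightarrow> (\<tau>, w) \<notin> lexord ?R" for \<tau>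
    using lexord_linear[of ?R w \<tau>] by (auto dest: asymD)
  then show ?thesis
    unfolding lsd_def by simp
qed

lemma lsd_imp_successor_pairs_adjacent:
  assumes perm: "permword w" and "lsd w"
  shows "successor_pairs_adjacent w"
proof (rule ccontr)
  assume "\<not> successor_pairs_adjacent w"
  then obtain p q where pq: "p < q" "q < length w" "w ! p = Suc (w ! q)" "q \<noteq> Suc p"
    by (auto simp: successor_pairs_adjacent_def)
  define v where "v = w ! q"
  define \<tau> where "\<tau> = map (transpose v (Suc v)) w"
  have dist: "distinct w" and set_w: "set w = {1..length w}"
    using perm by (auto simp: permword_def)
  have at_v: "t = q" if "t < length w" "w ! t = v" for t
    using that pq nth_eq_iff_index_eq[OF dist, of t q] by (simp add: v_def)
  have at_Suc_v: "t = p" if "t < length w" "w ! t = Suc v" for t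
    using that pq nth_eq_iff_index_eq[OF dist, of t p] by (simp add: v_def)
  have "v \<in> set w" "Suc v \<in> set w"
    using pq nth_mem[of q w] nth_mem[of p w] by (auto simp: v_def)
  then have "set \<tau> = set w"
    by (simp add: \<tau>_def)
  then have \<tau>_Sn: "\<tau> \<in> Sn (length w)"
    using dist set_w by (simp add: \<tau>_def Sn_def permword_def distinct_map inj_on_transpose)
  have \<tau>_desc: "desc \<tau> = desc w"
    unfolding \<tau>_def
  proof (rule desc_map_eq, rule transpose_Suc_less_iff)
    fix k assume k: "Suc k < length w"
    show "{w ! Suc k, w ! k} \<noteq> {v, Suc v}"
      using pq at_v[of k] at_v[of "Suc k"] at_Suc_v[of k] at_Suc_v[of "Suc k"] k
      by (auto simp: doubleton_eq_iff)
  qed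
  have "take p \<tau> = take p w"
  proof (rule nth_equalityI)
    fix t assume "t < length (take p \<tau>)"
    then have "t < p" "t < length w"
      by (auto simp: \<tau>_def)
    moreover from this have "w ! t \<noteq> v" "w ! t \<noteq> Suc v"
      using at_v[of t] at_Suc_v[of t] pq by auto
    ultimately show "take p \<tau> ! t = take p w ! t"
      by (simp add: \<tau>_def)
  qed (simp add: \<tau>_def)
  moreover have "\<tau> ! p < w ! p"
    using pq by (simp add: \<tau>_def v_def)
  ultimately have "(\<tau>, w) \<in> lexord {(a, b). a < b}"
    using pq(1,2) by (subst lexord_less_iff_first_difference) (auto simp: \<tau>_def intro!: exI[of _ p])
  with \<tau>_Sn \<tau>_desc \<open>lsd w\<close> show False
    by (auto simp: lsd_iff_no_lexord_smaller)
qed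

lemma successor_pairs_adjacent_imp_inversions_decreasing:
  assumes perm: "permword w" and adj: "successor_pairs_adjacent w"
  shows "inversions_decreasing w"
proof -
  have dist: "distinct w" and set_w: "set w = {1..length w}"
    using perm by (auto simp: permword_def)
  have "w ! Suc k < w ! k" if "i \<le> k" "k < j" "j < length w" "w ! j < w ! i" for i j k
    using that
  proof (induction j rule: measure_induct_rule[where f = "\<lambda>j. w ! i - w ! j"])
    case (less j)
    have "i < length w"
      using less.prems by simp
    then have "w ! i \<le> length w"
      using set_w nth_mem[of i w] by auto
    then have "Suc (w ! j) \<in> set w"
      using less.prems(4) set_w by auto
    then obtain l where l: "l < length w" "w ! l = Suc (w ! j)"
      by (auto simp: in_set_conv_nth)
    have below_i: "w ! l < w ! i" if "l \<noteq> i"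
    proof -
      have "w ! l \<noteq> w ! i"
        using that l(1) \<open>i < length w\<close> nth_eq_iff_index_eq[OF dist, of l i] by simp
      moreover have "w ! l \<le> w ! i"
        using l(2) less.prems(4) by simp
      ultimately show ?thesis
        by simp
    qed
    have IH: "w ! Suc k < w ! k" if "k < l" "l \<noteq> i"
    proof (rule less.IH)
      show "w ! i - w ! l < w ! i - w ! j"
        using l(2) below_i[OF that(2)] by simp
      show "w ! l < w ! i"
        using below_i[OF that(2)] .
    qed (use less.prems(1) l(1) that(1) in simp_all)
    have "l \<noteq> j"
      using l(2) n_not_Suc_n by metis
    then consider "l < j" | "j < l"
      by linarith
    then show ?case
    proof cases
      case 1
      with adj l less.prems(3) have "j = Suc l"
        unfolding successor_pairs_adjacent_def by blast
      then show ?thesis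
      proof (cases "k = l")
        case True
        then show ?thesis
          using \<open>j = Suc l\<close> l(2) by simp
      next
        case False
        then show ?thesis
          using IH \<open>j = Suc l\<close> less.prems(1,2) by simp
      qed
    next
      case 2
      then show ?thesis
        using IH less.prems(1,2) by simp
    qed
  qed
  then show ?thesis
    unfolding inversions_decreasing_def by blast
qed

lemma set_drop_eq_if_take_eq:
  assumes "distinct xs" "distinct ys" "set xs = set ys" "take i xs = take i ys"
  shows "set (drop i xs) = set (drop i ys)"
proof -
  have "set (drop i zs) = set zs - set (take i zs)" if "distinct zs" for zs :: "'a list"
  proof -
    have "set zs = set (take i zs) \<union> set (drop i zs)"
      by (metis append_take_drop_id set_append)
    with set_take_disj_set_drop_if_distinct[OF that, of i i] show ?thesis
      by blast
  qed
  with assms show ?thesis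
    by simp
qed

lemma decreasing_run_le:
  fixes xs :: "'a::linorder list"
  assumes "\<And>k. i \<le> k \<Longrightarrow> k < m \<Longrightarrow> xs ! Suc k < xs ! k" "i \<le> t" "t \<le> m"
  shows "xs ! t \<le> xs ! i"
  using assms(2,3)
proof (induction t rule: dec_induct)
  case base
  then show ?case by simp
next
  case (step n)
  then have "xs ! n \<le> xs ! i"
    by simp
  moreover have "xs ! Suc n < xs ! n"
    using step assms(1) by simp
  ultimately show ?case
    by simp
qed

lemma maximal_decreasing_run:
  fixes xs :: "'a::linorder list"
  assumes "i < length xs"
  obtains m where "i \<le> m" "m < length xs" "\<And>k. i \<le> k \<Longrightarrow> k < m \<Longrightarrow> xs ! Suc k < xs ! k"
    "Suc m < length xs \<Longrightarrow> \<not> xs ! Suc m < xs ! m"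
proof -
  have "i \<le> length xs - 1"
    using assms by simp
  then have "\<exists>m. i \<le> m \<and> m < length xs \<and> (\<forall>k. i \<le> k \<and> k < m \<longrightarrow> xs ! Suc k < xs ! k) \<and>
           (Suc m < length xs \<longrightarrow> \<not> xs ! Suc m < xs ! m)"
  proof (induction i rule: inc_induct)
    case base
    show ?case
      using assms by (intro exI[of _ "length xs - 1"]) auto
  next
    case (step n)
    show ?case
    proof (cases "xs ! Suc n < xs ! n")
      case True
      from step.IH obtain m where m: "Suc n \<le> m" "m < length xs"
          "\<forall>k. Suc n \<le> k \<and> k < m \<longrightarrow> xs ! Suc k < xs ! k"
          "Suc m < length xs \<longrightarrow> \<not> xs ! Suc m < xs ! m"
        by blast
      have "xs ! Suc k < xs ! k" if "n \<le> k" "k < m" for k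
        using m(3) True that by (cases "k = n") auto
      with m show ?thesis
        by (intro exI[of _ m]) auto
    next
      case False
      then show ?thesis
        using step.hyps by (intro exI[of _ n]) auto
    qed
  qed
  with that show thesis
    by blast
qed

lemma inversions_decreasing_smaller_in_run:
  assumes "inversions_decreasing w" "i \<le> m" "Suc m < length w \<Longrightarrow> \<not> w ! Suc m < w ! m"
    and "k < length w" "w ! k < w ! i"
  shows "k \<le> m"
proof (rule ccontr)
  assume "\<not> k \<le> m"
  then have "w ! Suc m < w ! m"
    using assms by (intro inversions_decreasingD[OF assms(1), of i m k]) auto
  with assms(3,4) \<open>\<not> k \<le> m\<close> show False
    by simp
qed

lemma inversions_decreasing_imp_lsd:
  assumes perm: "permword w" and runs: "inversions_decreasing w"
  shows "lsd w"
  unfolding lsd_iff_no_lexord_smaller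
proof (intro ballI impI notI)
  fix \<tau> assume "\<tau> \<in> Sn (length w)" and same_desc: "desc \<tau> = desc w"
    and "(\<tau>, w) \<in> lexord {(a, b). a < b}"
  moreover have dist_w: "distinct w"
    using perm by (simp add: permword_def)
  ultimately have dist_\<tau>: "distinct \<tau>" and set_\<tau>: "set \<tau> = set w" and len: "length \<tau> = length w"
    using perm by (auto simp: Sn_def permword_def)
  obtain i where i: "i < length w" "take i \<tau> = take i w" "\<tau> ! i < w ! i"
    using \<open>(\<tau>, w) \<in> lexord _\<close> len by (auto simp: lexord_less_iff_first_difference)
  obtain m where m: "i \<le> m" "m < length w" "\<And>k. i \<le> k \<Longrightarrow> k < m \<Longrightarrow> w ! Suc k < w ! k"
    and m_max: "Suc m < length w \<Longrightarrow> \<not> w ! Suc m < w ! m"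
    using maximal_decreasing_run[OF i(1)] by blast
  have "\<tau> ! Suc k < \<tau> ! k" if "i \<le> k" "k < m" for k
    using m(2) m(3)[OF that] that same_desc Suc_mem_desc_iff[of k \<tau>] Suc_mem_desc_iff[of k w] len
    by simp
  then have \<tau>_le: "\<tau> ! t \<le> \<tau> ! i" if "i \<le> t" "t \<le> m" for t
    using that by (rule decreasing_run_le)
  have "nth \<tau> ` {i..m} \<subseteq> nth w ` {i..m}"
  proof
    fix c assume "c \<in> nth \<tau> ` {i..m}"
    then obtain t where t: "i \<le> t" "t \<le> m" "c = \<tau> ! t"
      by auto
    then have "c \<in> set (drop i \<tau>)"
      using m(2) len by (auto simp: in_set_conv_nth intro!: exI[of _ "t - i"])
    also have "\<dots> = set (drop i w)"
      using dist_\<tau> dist_w set_\<tau> i(2) by (rule set_drop_eq_if_take_eq)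
    finally obtain d where d: "d < length w - i" "w ! (i + d) = c"
      by (auto simp: in_set_conv_nth)
    define k where "k = i + d"
    have k: "i \<le> k" "k < length w" "w ! k = c"
      using d by (auto simp: k_def)
    moreover have "k \<le> m"
      using runs m(1) m_max k(2)
    proof (rule inversions_decreasing_smaller_in_run)
      show "w ! k < w ! i"
        using k(3) t(3) \<tau>_le[OF t(1,2)] i(3) by simp
    qed
    ultimately show "c \<in> nth w ` {i..m}"
      by auto
  qed
  moreover have "card (nth \<tau> ` {i..m}) = card (nth w ` {i..m})"
    using dist_\<tau> dist_w m(2) len by (simp add: card_image inj_on_nth)
  ultimately have "nth \<tau> ` {i..m} = nth w ` {i..m}"
    by (intro card_subset_eq) auto
  moreover have "w ! i \<in> nth w ` {i..m}"
    using m(1) by simp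
  ultimately obtain t where "t \<in> {i..m}" "w ! i = \<tau> ! t"
    by (metis imageE)
  then show False
    using \<tau>_le i(3) by fastforce
qed

lemma lsd_iff_inversions_decreasing:
  "permword w \<Longrightarrow> lsd w \<longleftrightarrow> inversions_decreasing w"
  using lsd_imp_successor_pairs_adjacent successor_pairs_adjacent_imp_inversions_decreasing
    inversions_decreasing_imp_lsd by blast

lemma mpairsD:
  assumes "(u, v) \<in> mpairs \<sigma> \<tau>"
  shows "permword (u @ v)" "distinct u" "distinct v" "st u = \<sigma>" "st v = \<tau>"
proof -
  have "length u = length \<sigma>" "length v = length \<tau>"
    using assms by (auto simp: mpairs_def)
  then show "permword (u @ v)"
    using assms by (auto simp: mpairs_def permword_def)
  show "distinct u" "distinct v" "st u = \<sigma>" "st v = \<tau>"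
    using assms by (auto simp: mpairs_def)
qed

lemma mpairs_lsd_imp_lsd:
  assumes "(u, v) \<in> mpairs \<sigma> \<tau>" "lsd (u @ v)"
  shows "lsd \<sigma>" "lsd \<tau>"
proof -
  note uv = mpairsD[OF assms(1)]
  have "inversions_decreasing (u @ v)"
    using assms(2) uv(1) lsd_iff_inversions_decreasing by blast
  then have "inversions_decreasing (st u)" "inversions_decreasing (st v)"
    using inversions_decreasing_append inversions_decreasing_st_iff by blast+
  then show "lsd \<sigma>" "lsd \<tau>"
    using uv permword_st lsd_iff_inversions_decreasing by auto
qed

lemma keys_map_subset: "Poly_Mapping.keys (Poly_Mapping.map f p) \<subseteq> Poly_Mapping.keys p"
  by (auto simp: in_keys_iff map.rep_eq)

lemma keys_mbasic: "Poly_Mapping.keys (mbasic \<sigma> \<tau>) \<subseteq> (\<lambda>(u, v). u @ v) ` mpairs \<sigma> \<tau>"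
  unfolding mbasic_def by (rule order.trans[OF keys_sum]) auto

lemma keys_mprod:
  "Poly_Mapping.keys (mprod f g) \<subseteq>
     (\<Union>\<sigma> \<in> Poly_Mapping.keys f. \<Union>\<tau> \<in> Poly_Mapping.keys g. (\<lambda>(u, v). u @ v) ` mpairs \<sigma> \<tau>)"
  unfolding mprod_def
  by (intro order.trans[OF keys_sum] UN_mono order.trans[OF keys_map_subset] keys_mbasic order_refl)

lemma mprod_in_J_nonlsd:
  assumes "(\<forall>\<sigma> \<in> Poly_Mapping.keys f. \<not> lsd \<sigma>) \<or> (\<forall>\<tau> \<in> Poly_Mapping.keys g. \<not> lsd \<tau>)"
  shows "mprod f g \<in> J_nonlsd"
  unfolding J_nonlsd_def
proof (intro CollectI subsetI)
  fix w assume "w \<in> Poly_Mapping.keys (mprod f g)"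
  then obtain \<sigma> \<tau> where keys: "\<sigma> \<in> Poly_Mapping.keys f" "\<tau> \<in> Poly_Mapping.keys g"
      and "w \<in> (\<lambda>(u, v). u @ v) ` mpairs \<sigma> \<tau>"
    using keys_mprod by blast
  then obtain u v where "(u, v) \<in> mpairs \<sigma> \<tau>" "w = u @ v"
    by auto
  with keys show "permword w \<and> \<not> lsd w"
    using assms mpairsD(1) mpairs_lsd_imp_lsd by blast
qed

theorem proposition14p1:
  shows "J_nonlsd \<subseteq> MPR \<and>
         (\<forall>x \<in> MPR. \<forall>y \<in> J_nonlsd. mprod x y \<in> J_nonlsd \<and> mprod y x \<in> J_nonlsd)"
proof (intro conjI ballI)
  show "J_nonlsd \<subseteq> MPR"
    unfolding J_nonlsd_def MPR_def by auto
next
  fix x y assume "y \<in> J_nonlsd"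
  then have "\<forall>\<sigma> \<in> Poly_Mapping.keys y. \<not> lsd \<sigma>"
    by (auto simp: J_nonlsd_def)
  then show "mprod x y \<in> J_nonlsd" "mprod y x \<in> J_nonlsd"
    by (simp_all add: mprod_in_J_nonlsd)
qed

end
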